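(* In the setting of the multi-dimensional system $\frac{d\boldsymbol{x}}{dt}=\mathbf{A}\boldsymbol{x}+\mathbf{B}_p\boldsymbol{p}+\mathbf{B}_d\boldsymbol{d}$ on $\mathcal{T}=[0,t_f]$ (with $\mathbf{A}$ having non-positive diagonal and non-negative off-diagonal entries, $\mathbf{B}_p\ge0$ entrywise, given $\boldsymbol{d}$ and $\boldsymbol{x}_0$, power bounds $\boldsymbol{0}\le\boldsymbol{p}_{\min}\le\boldsymbol{p}_{\max}$, state bounds $\boldsymbol{x}_{\min}\le\boldsymbol{x}_{\max}$), let $\boldsymbol{\alpha}(t),\boldsymbol{\beta}(t)$ and $\boldsymbol{b}_\pm(t)$ be defined as follows: $\alpha_{i,j}(t)=\max_{0\le\tau\le t}(e^{\mathbf{A}(t-\tau)}\mathbf{B}_p)_{i,j}$, $\beta_{i,j}(t)=\min_{0\le\tau\le t}(e^{\mathbf{A}(t-\tau)}\mathbf{B}_p)_{i,j}$, and $\boldsymbol{b}_\pm(t)=\int_0^t e^{\mathbf{A}(t-\tau)}\mathbf{B}_p\boldsymbol{p}_\pm(\tau)\,d\tau$, where $\boldsymbol{p}_\pm$ are feasible power trajectories (satisfying the power bounds and, with the same $\boldsymbol{x}_0,\boldsymbol{d}$, the state bounds for all $t$). For each $t\in\mathcal{T}$ let $\big(\mathbf{E}^{\mathrm{TI,d}}_{\mathrm{up}}(t),\mathbf{E}^{\mathrm{TI,d}}_{\mathrm{down}}(t)\big)\in\mathbb{R}^{N_p}\times\mathbb{R}^{N_p}$ be an optimal solution (assumed to exist)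 of $$\max_{\mathbf{E}_+,\mathbf{E}_-}\ \sum_{i=1}^{N_p}\ln(\mathrm{E}_{+,i}-\mathrm{E}_{-,i})\quad\text{s.t.}\quad \boldsymbol{\alpha}(t)\mathbf{E}_+\le\boldsymbol{b}_+(t),\ \ \boldsymbol{\beta}(t)\mathbf{E}_-\ge\boldsymbol{b}_-(t),\ \ \mathbf{E}_+\ge\mathbf{E}_-.$$ If a power trajectory $\boldsymbol{p}_a$ satisfies $\boldsymbol{p}_{\min}\le\boldsymbol{p}_a(t)\le\boldsymbol{p}_{\max}$ and, for every input index $i$ and all $t\in\mathcal{T}$, $$\mathrm{E}^{\mathrm{TI,d}}_{\mathrm{down},i}(t)\le\int_0^t p_{a,i}(\tau)\,d\tau\le\mathrm{E}^{\mathrm{TI,d}}_{\mathrm{up},i}(t),$$ then the resulting state $\boldsymbol{x}_a$ (same $\boldsymbol{x}_0$, $\boldsymbol{d}$) satisfies $\boldsymbol{x}_{\min}\le\boldsymbol{x}_a(t)\le\boldsymbol{x}_{\max}$ for all $t\in\mathcal{T}$.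
   Context: Vector inequalities and integrals are componentwise. The optimization problem describes the largest (in volume) axis-aligned box inscribed in the polytope $\{\mathbf{E}:\boldsymbol{\alpha}(t)\mathbf{E}\le\boldsymbol{b}_+(t),\ \boldsymbol{\beta}(t)\mathbf{E}\ge\boldsymbol{b}_-(t)\}$. States are given by $\boldsymbol{x}(t)=e^{\mathbf{A}t}\boldsymbol{x}_0+\int_0^t e^{\mathbf{A}(t-\tau)}(\mathbf{B}_d\boldsymbol{d}(\tau)+\mathbf{B}_p\boldsymbol{p}(\tau))\,d\tau$. *)

theory Defs
  imports "HOL-Analysis.Analysis"
begin

fun mat_pow :: "real^'n^'n \<Rightarrow> nat \<Rightarrow> real^'n^'n" where
  "mat_pow M 0 = mat 1"
| "mat_pow M (Suc k) = M ** mat_pow M k"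

definition mat_exp :: "real^'n^'n \<Rightarrow> real^'n^'n" where
  "mat_exp M = (\<Sum>k. (1 / fact k) *\<^sub>R mat_pow M k)"

definition state ::
  "real^'n^'n \<Rightarrow> real^'m^'n \<Rightarrow> real^'k^'n \<Rightarrow> real^'n \<Rightarrow> (real \<Rightarrow> real^'k)
   \<Rightarrow> (real \<Rightarrow> real^'m) \<Rightarrow> real \<Rightarrow> real^'n" where
  "state A Bp Bd x0 d p t =
     mat_exp (t *\<^sub>R A) *v x0
     + integral {0..t} (\<lambda>\<tau>. mat_exp ((t - \<tau>) *\<^sub>R A) *v (Bd *v d \<tau> + Bp *v p \<tau>))"

definition feasible_power ::
  "real^'n^'n \<Rightarrow> real^'m^'n \<Rightarrow> real^'k^'n \<Rightarrow> real^'n \<Rightarrow> (real \<Rightarrow> real^'k)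
   \<Rightarrow> real \<Rightarrow> real^'m \<Rightarrow> real^'m \<Rightarrow> real^'n \<Rightarrow> real^'n \<Rightarrow> (real \<Rightarrow> real^'m) \<Rightarrow> bool" where
  "feasible_power A Bp Bd x0 d tf pmin pmax xmin xmax p \<longleftrightarrow>
     (\<forall>t\<in>{0..tf}. pmin \<le> p t \<and> p t \<le> pmax
        \<and> xmin \<le> state A Bp Bd x0 d p t \<and> state A Bp Bd x0 d p t \<le> xmax)"

definition alpha_coef :: "real^'n^'n \<Rightarrow> real^'m^'n \<Rightarrow> real \<Rightarrow> real^'m^'n" where
  "alpha_coef A Bp t = (\<chi> i j. (SUP \<tau>\<in>{0..t}. (mat_exp ((t - \<tau>) *\<^sub>R A) ** Bp) $ i $ j))"

definition beta_coef :: "real^'n^'n \<Rightarrow> real^'m^'n \<Rightarrow> real \<Rightarrow> real^'m^'n" where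
  "beta_coef A Bp t = (\<chi> i j. (INF \<tau>\<in>{0..t}. (mat_exp ((t - \<tau>) *\<^sub>R A) ** Bp) $ i $ j))"

definition b_coef :: "real^'n^'n \<Rightarrow> real^'m^'n \<Rightarrow> (real \<Rightarrow> real^'m) \<Rightarrow> real \<Rightarrow> real^'n" where
  "b_coef A Bp p t = integral {0..t} (\<lambda>\<tau>. (mat_exp ((t - \<tau>) *\<^sub>R A) ** Bp) *v p \<tau>)"

definition box_objective :: "real^'m \<Rightarrow> real^'m \<Rightarrow> ereal" where
  "box_objective Ep Em =
     (if (\<forall>i. Em $ i < Ep $ i) then ereal (\<Sum>i\<in>UNIV. ln (Ep $ i - Em $ i)) else -\<infinity>)"

definition box_feasible ::
  "real^'m^'n \<Rightarrow> real^'m^'n \<Rightarrow> real^'n \<Rightarrow> real^'n \<Rightarrow> real^'m \<Rightarrow> real^'m \<Rightarrow> bool" where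
  "box_feasible al be bp bm Ep Em \<longleftrightarrow> al *v Ep \<le> bp \<and> be *v Em \<ge> bm \<and> Ep \<ge> Em"

definition box_optimal ::
  "real^'m^'n \<Rightarrow> real^'m^'n \<Rightarrow> real^'n \<Rightarrow> real^'n \<Rightarrow> real^'m \<Rightarrow> real^'m \<Rightarrow> bool" where
  "box_optimal al be bp bm Ep Em \<longleftrightarrow> box_feasible al be bp bm Ep Em \<and>
     (\<forall>Ep' Em'. box_feasible al be bp bm Ep' Em' \<longrightarrow> box_objective Ep' Em' \<le> box_objective Ep Em)"

end

theory Submission
  imports Defs
begin

text \<open>For a Metzler matrix A and s \<ge> 0 the exponential exp(sA) is entrywise nonnegative:
  s(A + cI) is a nonnegative matrix for large c, and exp(X + cI) = e^c exp(X).
  Hence the input response exp(A(t - \<tau>)) Bp is a continuous nonnegative kernel lying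
  entrywise between \<beta>(t) and \<alpha>(t), so every nonnegative power trajectory p satisfies
  \<beta>(t) \<integral>p \<le> b_p(t) \<le> \<alpha>(t) \<integral>p. The energy bounds on pa and the constraints of the box
  problem therefore squeeze b_pa(t) between b_-(t) and b_+(t). As the state depends on p
  only through the summand b_p(t), x_a(t) lies between the feasible states of p- and p+.\<close>

lemma mat_pow_scaleR: "mat_pow (r *\<^sub>R X) k = (r ^ k) *\<^sub>R mat_pow X k"
  by (induction k) (simp_all add: matrix_scalar_ac scalar_matrix_assoc[symmetric])

definition mat_abs_sum :: "real^'n^'m \<Rightarrow> real" where
  "mat_abs_sum X = (\<Sum>a\<in>UNIV. \<Sum>b\<in>UNIV. \<bar>X $ a $ b\<bar>)"

lemma abs_entry_le_mat_abs_sum: "\<bar>X $ a $ b\<bar> \<le> mat_abs_sum X"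
proof -
  have "\<bar>X $ a $ b\<bar> \<le> (\<Sum>b\<in>UNIV. \<bar>X $ a $ b\<bar>)"
    by (rule member_le_sum) auto
  also have "\<dots> \<le> mat_abs_sum X"
    unfolding mat_abs_sum_def by (rule member_le_sum) (auto intro: sum_nonneg)
  finally show ?thesis .
qed

lemma norm_le_mat_abs_sum: "norm X \<le> mat_abs_sum X"
proof -
  have "norm X \<le> (\<Sum>a\<in>UNIV. norm (X $ a))"
    unfolding norm_vec_def by (rule L2_set_le_sum) simp
  also have "\<dots> \<le> mat_abs_sum X"
    unfolding mat_abs_sum_def by (intro sum_mono norm_le_l1_cart)
  finally show ?thesis .
qed

lemma abs_mat_pow_entry_le:
  fixes X :: "real^'n^'n"
  assumes "\<And>a b. \<bar>X $ a $ b\<bar> \<le> B"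
  shows "\<bar>mat_pow X k $ i $ j\<bar> \<le> (real CARD('n) * B) ^ k"
proof (induction k arbitrary: i j)
  case 0
  then show ?case by (simp add: mat_def)
next
  case (Suc k)
  have "0 \<le> B" using assms[of i i] by linarith
  have "\<bar>mat_pow X (Suc k) $ i $ j\<bar> \<le> (\<Sum>l\<in>UNIV. \<bar>X $ i $ l\<bar> * \<bar>mat_pow X k $ l $ j\<bar>)"
    by (simp add: matrix_matrix_mult_def order_trans[OF sum_abs] abs_mult)
  also have "\<dots> \<le> (\<Sum>l\<in>(UNIV::'n set). B * (real CARD('n) * B) ^ k)"
    by (intro sum_mono mult_mono) (use assms Suc \<open>0 \<le> B\<close> in auto)
  finally show ?case by simp
qed

lemma summable_mat_exp_entry_abs:
  fixes X :: "real^'n^'n"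
  shows "summable (\<lambda>k. \<bar>(1 / fact k) * mat_pow X k $ i $ j\<bar>)"
proof (rule summable_comparison_test'[where N = 0])
  let ?B = "real CARD('n) * mat_abs_sum X"
  show "summable (\<lambda>k. inverse (fact k) * ?B ^ k)"
    by (rule summable_exp)
  show "norm \<bar>(1 / fact k) * mat_pow X k $ i $ j\<bar> \<le> inverse (fact k) * ?B ^ k" for k
    using abs_mat_pow_entry_le[of X, OF abs_entry_le_mat_abs_sum, of k i j]
    by (simp add: abs_mult divide_inverse mult_left_mono)
qed

lemma summable_mat_exp:
  fixes X :: "real^'n^'n"
  shows "summable (\<lambda>k. (1 / fact k) *\<^sub>R mat_pow X k)"
proof (rule summable_norm_cancel, rule summable_comparison_test'[where N = 0])
  show "summable (\<lambda>k. mat_abs_sum ((1 / fact k) *\<^sub>R mat_pow X k))"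
    unfolding mat_abs_sum_def
    using summable_mat_exp_entry_abs[of X] by (simp add: summable_sum)
  show "norm (norm ((1 / fact k) *\<^sub>R mat_pow X k))
      \<le> mat_abs_sum ((1 / fact k) *\<^sub>R mat_pow X k)" for k
    using norm_le_mat_abs_sum[of "(1 / fact k) *\<^sub>R mat_pow X k"]
    by (simp only: real_norm_def abs_norm_cancel)
qed

lemma mat_exp_entry_sums:
  fixes X :: "real^'n^'n"
  shows "(\<lambda>k. (1 / fact k) * mat_pow X k $ i $ j) sums (mat_exp X $ i $ j)"
proof -
  have "bounded_linear (\<lambda>M::real^'n^'n. M $ i $ j)"
    by (intro bounded_linear_compose[OF bounded_linear_vec_nth] bounded_linear_vec_nth)
  from bounded_linear.sums[OF this summable_sums[OF summable_mat_exp]]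
  show ?thesis by (simp add: mat_exp_def)
qed

lemma binomial_sum_Suc_scaleR:
  fixes P :: "nat \<Rightarrow> 'a::real_vector" and c :: real
  shows "(\<Sum>m\<le>Suc k. (real (Suc k choose m) * c ^ (Suc k - m)) *\<^sub>R P m)
       = (\<Sum>m\<le>k. (real (k choose m) * c ^ (k - m)) *\<^sub>R P (Suc m))
         + c *\<^sub>R (\<Sum>m\<le>k. (real (k choose m) * c ^ (k - m)) *\<^sub>R P m)"
proof -
  let ?T = "\<Sum>m<k. (real (k choose Suc m) * c ^ (k - m)) *\<^sub>R P (Suc m)"
  have "c *\<^sub>R (\<Sum>m<k. (real (k choose Suc m) * c ^ (k - Suc m)) *\<^sub>R P (Suc m)) = ?T"
    unfolding scaleR_sum_right
    by (intro sum.cong refl) (simp add: Suc_diff_Suc[symmetric])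
  then have low: "c *\<^sub>R (\<Sum>m\<le>k. (real (k choose m) * c ^ (k - m)) *\<^sub>R P m)
      = c ^ Suc k *\<^sub>R P 0 + ?T"
    by (simp add: sum.atMost_shift scaleR_add_right)
  have "(\<Sum>m\<le>Suc k. (real (Suc k choose m) * c ^ (Suc k - m)) *\<^sub>R P m)
      = c ^ Suc k *\<^sub>R P 0 + (\<Sum>m\<le>k. (real (Suc k choose Suc m) * c ^ (k - m)) *\<^sub>R P (Suc m))"
    by (subst sum.atMost_Suc_shift) simp
  also have "(\<Sum>m\<le>k. (real (Suc k choose Suc m) * c ^ (k - m)) *\<^sub>R P (Suc m))
      = (\<Sum>m\<le>k. (real (k choose m) * c ^ (k - m)) *\<^sub>R P (Suc m))
        + (\<Sum>m\<le>k. (real (k choose Suc m) * c ^ (k - m)) *\<^sub>R P (Suc m))"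
    by (simp add: sum.distrib[symmetric] algebra_simps)
  also have "(\<Sum>m\<le>k. (real (k choose Suc m) * c ^ (k - m)) *\<^sub>R P (Suc m)) = ?T"
    by (simp flip: lessThan_Suc_atMost)
  finally show ?thesis
    using low by (simp add: algebra_simps)
qed

lemma matrix_mul_sum_right:
  fixes X :: "real^'n^'m"
  shows "finite S \<Longrightarrow> X ** (\<Sum>m\<in>S. f m) = (\<Sum>m\<in>S. X ** f m)"
  by (induction S rule: finite_induct) (simp_all add: matrix_add_ldistrib)

lemma matrix_add_rdistrib:
  fixes X Y :: "real^'n^'m"
  shows "(X + Y) ** Z = X ** Z + Y ** Z"
  by (simp add: vec_eq_iff matrix_matrix_mult_def sum.distrib algebra_simps)

lemma mat_pow_add_scaleR_id:
  fixes X :: "real^'n^'n"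
  shows "mat_pow (X + c *\<^sub>R mat 1) k
       = (\<Sum>m\<le>k. (real (k choose m) * c ^ (k - m)) *\<^sub>R mat_pow X m)"
proof (induction k)
  case 0
  then show ?case by simp
next
  case (Suc k)
  have "mat_pow (X + c *\<^sub>R mat 1) (Suc k)
      = X ** mat_pow (X + c *\<^sub>R mat 1) k + c *\<^sub>R mat_pow (X + c *\<^sub>R mat 1) k"
    by (simp add: matrix_add_rdistrib scalar_matrix_assoc[symmetric] matrix_mul_lid)
  also have "X ** mat_pow (X + c *\<^sub>R mat 1) k
      = (\<Sum>m\<le>k. (real (k choose m) * c ^ (k - m)) *\<^sub>R mat_pow X (Suc m))"
    by (simp add: Suc.IH matrix_mul_sum_right matrix_scalar_ac scalar_matrix_assoc)
  finally show ?case
    using binomial_sum_Suc_scaleR[of k c "mat_pow X"] by (simp add: Suc.IH)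
qed

lemma mat_exp_add_scaleR_id:
  fixes X :: "real^'n^'n"
  shows "mat_exp (X + c *\<^sub>R mat 1) $ i $ j = exp c * mat_exp X $ i $ j"
proof -
  define a where "a m = (1 / fact m) * mat_pow X m $ i $ j" for m
  define b where "b l = c ^ l / fact l" for l
  have a_sums: "a sums (mat_exp X $ i $ j)"
    unfolding a_def by (rule mat_exp_entry_sums)
  have b_sums: "b sums exp c"
    unfolding b_def using exp_converges[of c] by (simp add: divide_inverse mult.commute)
  have "summable (\<lambda>m. norm (a m))"
    unfolding a_def using summable_mat_exp_entry_abs by simp
  moreover have "summable (\<lambda>l. norm (b l))"
    unfolding b_def using summable_exp[of "\<bar>c\<bar>"]
    by (simp add: abs_mult divide_inverse power_abs mult.commute)
  ultimately have "(\<Sum>k. a k) * (\<Sum>k. b k) = (\<Sum>k. \<Sum>m\<le>k. a m * b (k - m))"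
    by (rule Cauchy_product)
  also have "(\<lambda>k. \<Sum>m\<le>k. a m * b (k - m))
      = (\<lambda>k. (1 / fact k) * mat_pow (X + c *\<^sub>R mat 1) k $ i $ j)"
  proof
    fix k
    have "a m * b (k - m)
        = (1 / fact k) * (real (k choose m) * c ^ (k - m)) * mat_pow X m $ i $ j" if "m \<le> k" for m
      unfolding a_def b_def binomial_fact[OF that] by (simp add: field_simps)
    then show "(\<Sum>m\<le>k. a m * b (k - m))
        = (1 / fact k) * mat_pow (X + c *\<^sub>R mat 1) k $ i $ j"
      by (simp add: mat_pow_add_scaleR_id sum_component sum_distrib_left mult.assoc)
  qed
  also have "(\<Sum>k. (1 / fact k) * mat_pow (X + c *\<^sub>R mat 1) k $ i $ j)
      = mat_exp (X + c *\<^sub>R mat 1) $ i $ j"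
    using mat_exp_entry_sums by (rule sums_unique[symmetric])
  finally show ?thesis
    using sums_unique[OF a_sums] sums_unique[OF b_sums] by (simp add: mult.commute)
qed

lemma mat_pow_nonneg:
  fixes X :: "real^'n^'n"
  assumes "\<And>a b. 0 \<le> X $ a $ b"
  shows "0 \<le> mat_pow X k $ i $ j"
  using assms
  by (induction k arbitrary: i j) (auto simp: mat_def matrix_matrix_mult_def intro!: sum_nonneg)

lemma mat_exp_nonneg:
  fixes X :: "real^'n^'n"
  assumes "\<And>a b. 0 \<le> X $ a $ b"
  shows "0 \<le> mat_exp X $ i $ j"
proof -
  have "0 \<le> (\<Sum>k. (1 / fact k) * mat_pow X k $ i $ j)"
    using mat_exp_entry_sums[of X i j]
    by (intro suminf_nonneg) (auto simp: sums_iff mat_pow_nonneg[OF assms])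
  with mat_exp_entry_sums[of X i j] show ?thesis
    by (simp add: sums_iff)
qed

definition metzler :: "real^'n^'n \<Rightarrow> bool" where
  "metzler A \<longleftrightarrow> (\<forall>i j. i \<noteq> j \<longrightarrow> 0 \<le> A $ i $ j)"

lemma metzler_mat_exp_nonneg:
  fixes A :: "real^'n^'n"
  assumes "metzler A" and "0 \<le> s"
  shows "0 \<le> mat_exp (s *\<^sub>R A) $ i $ j"
proof -
  define c where "c = mat_abs_sum A"
  define N where "N = s *\<^sub>R (A + c *\<^sub>R mat 1)"
  have N_nonneg: "0 \<le> N $ a $ b" for a b
  proof (cases "a = b")
    case True
    have "- A $ a $ a \<le> c"
      unfolding c_def using abs_entry_le_mat_abs_sum[of A a a] by linarith
    then show ?thesis using True \<open>0 \<le> s\<close> by (simp add: N_def mat_def)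
  next
    case False
    then show ?thesis using assms by (simp add: N_def mat_def metzler_def)
  qed
  have "s *\<^sub>R A = N + (- (s * c)) *\<^sub>R mat 1"
    by (simp add: N_def algebra_simps)
  then show ?thesis
    using mat_exp_nonneg[OF N_nonneg] by (simp only: mat_exp_add_scaleR_id) simp
qed

lemma isCont_mat_exp_scaleR_entry:
  fixes A :: "real^'n^'n"
  shows "isCont (\<lambda>s. mat_exp (s *\<^sub>R A) $ i $ j) x"
proof -
  let ?a = "\<lambda>k. (1 / fact k) * mat_pow A k $ i $ j"
  have powser: "(\<lambda>k. ?a k * s ^ k) sums mat_exp (s *\<^sub>R A) $ i $ j" for s
    using mat_exp_entry_sums[of "s *\<^sub>R A" i j] by (simp add: mat_pow_scaleR mult_ac)
  have "isCont (\<lambda>s. \<Sum>k. ?a k * s ^ k) x"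
    using powser by (intro isCont_powser_converges_everywhere) (rule sums_summable)
  then show ?thesis
    using powser by (simp add: sums_iff)
qed

lemma integrable_continuous_mult_nonneg:
  fixes f g :: "real \<Rightarrow> real"
  assumes f: "continuous_on {a..b} f" and g: "g integrable_on {a..b}"
    and g_nonneg: "\<And>x. x \<in> {a..b} \<Longrightarrow> 0 \<le> g x"
  shows "(\<lambda>x. f x * g x) integrable_on {a..b}"
proof -
  have "bounded (f ` {a..b})"
    by (rule compact_imp_bounded[OF compact_continuous_image[OF f compact_Icc]])
  moreover have "f \<in> borel_measurable (lebesgue_on {a..b})"
    by (rule continuous_imp_measurable_on_sets_lebesgue[OF f]) simp
  moreover have "g absolutely_integrable_on {a..b}"
    by (rule nonnegative_absolutely_integrable_1[OF g g_nonneg])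
  ultimately have "(\<lambda>x. f x * g x) absolutely_integrable_on {a..b}"
    by (intro absolutely_integrable_bounded_measurable_product_real) auto
  then show ?thesis
    by (rule set_lebesgue_integral_eq_integral(1))
qed

lemma integral_mult_le_SUP:
  fixes f g :: "real \<Rightarrow> real"
  assumes f: "continuous_on {a..b} f" and "g integrable_on {a..b}"
    and g_nonneg: "\<And>x. x \<in> {a..b} \<Longrightarrow> 0 \<le> g x"
  shows "integral {a..b} (\<lambda>x. f x * g x) \<le> (SUP x\<in>{a..b}. f x) * integral {a..b} g"
proof -
  have "bdd_above (f ` {a..b})"
    by (rule bounded_imp_bdd_above[OF compact_imp_bounded[OF compact_continuous_image[OF f compact_Icc]]])
  then have "integral {a..b} (\<lambda>x. f x * g x) \<le> integral {a..b} (\<lambda>x. (SUP x\<in>{a..b}. f x) * g x)"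
    by (intro integral_le integrable_continuous_mult_nonneg integrable_on_cmult_left assms
        mult_right_mono cSUP_upper) (auto intro: g_nonneg)
  then show ?thesis by simp
qed

lemma integral_mult_ge_INF:
  fixes f g :: "real \<Rightarrow> real"
  assumes f: "continuous_on {a..b} f" and "g integrable_on {a..b}"
    and g_nonneg: "\<And>x. x \<in> {a..b} \<Longrightarrow> 0 \<le> g x"
  shows "(INF x\<in>{a..b}. f x) * integral {a..b} g \<le> integral {a..b} (\<lambda>x. f x * g x)"
proof -
  have "bdd_below (f ` {a..b})"
    by (rule bounded_imp_bdd_below[OF compact_imp_bounded[OF compact_continuous_image[OF f compact_Icc]]])
  then have "integral {a..b} (\<lambda>x. (INF x\<in>{a..b}. f x) * g x) \<le> integral {a..b} (\<lambda>x. f x * g x)"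
    by (intro integral_le integrable_continuous_mult_nonneg integrable_on_cmult_left assms
        mult_right_mono cINF_lower) (auto intro: g_nonneg)
  then show ?thesis by simp
qed

context
  fixes a b :: real and M :: "real \<Rightarrow> real^'m^'n" and p :: "real \<Rightarrow> real^'m"
  assumes M_cont: "\<And>i j. continuous_on {a..b} (\<lambda>\<tau>. M \<tau> $ i $ j)"
    and p_int: "p integrable_on {a..b}" and p_nonneg: "\<And>\<tau>. \<tau> \<in> {a..b} \<Longrightarrow> 0 \<le> p \<tau>"
begin

lemma integrable_mat_vec_entry: "(\<lambda>\<tau>. M \<tau> $ i $ j * p \<tau> $ j) integrable_on {a..b}"
  using p_int p_nonneg
  by (intro integrable_continuous_mult_nonneg M_cont)
    (auto simp: integrable_on_iff_component less_eq_vec_def)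

lemma integrable_mat_vec: "(\<lambda>\<tau>. M \<tau> *v p \<tau>) integrable_on {a..b}"
proof -
  have "(\<lambda>\<tau>. (M \<tau> *v p \<tau>) $ i) integrable_on {a..b}" for i
    by (simp add: matrix_vector_mult_def integrable_sum integrable_mat_vec_entry)
  then show ?thesis
    using integrable_on_iff_component by blast
qed

lemma integral_mat_vec_component:
  "integral {a..b} (\<lambda>\<tau>. M \<tau> *v p \<tau>) $ i
     = (\<Sum>j\<in>UNIV. integral {a..b} (\<lambda>\<tau>. M \<tau> $ i $ j * p \<tau> $ j))"
  using integral_component_eq_cart[OF integrable_mat_vec, of i]
  by (simp add: matrix_vector_mult_def integral_sum integrable_mat_vec_entry)

lemma integral_mat_vec_le_SUP:
  "integral {a..b} (\<lambda>\<tau>. M \<tau> *v p \<tau>) \<le> (\<chi> i j. SUP \<tau>\<in>{a..b}. M \<tau> $ i $ j) *v integral {a..b} p"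
proof -
  have p_entry: "(\<lambda>\<tau>. p \<tau> $ j) integrable_on {a..b}" "\<And>\<tau>. \<tau> \<in> {a..b} \<Longrightarrow> 0 \<le> p \<tau> $ j" for j
    using p_int p_nonneg by (auto simp: integrable_on_iff_component less_eq_vec_def)
  have "integral {a..b} (\<lambda>\<tau>. M \<tau> *v p \<tau>) $ i
      \<le> ((\<chi> i j. SUP \<tau>\<in>{a..b}. M \<tau> $ i $ j) *v integral {a..b} p) $ i" for i
  proof -
    have "integral {a..b} (\<lambda>\<tau>. M \<tau> *v p \<tau>) $ i
        = (\<Sum>j\<in>UNIV. integral {a..b} (\<lambda>\<tau>. M \<tau> $ i $ j * p \<tau> $ j))"
      by (rule integral_mat_vec_component)
    also have "\<dots> \<le> (\<Sum>j\<in>UNIV. (SUP \<tau>\<in>{a..b}. M \<tau> $ i $ j) * integral {a..b} (\<lambda>\<tau>. p \<tau> $ j))"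
      by (intro sum_mono integral_mult_le_SUP[OF M_cont p_entry])
    also have "\<dots> = ((\<chi> i j. SUP \<tau>\<in>{a..b}. M \<tau> $ i $ j) *v integral {a..b} p) $ i"
      by (simp add: matrix_vector_mult_def integral_component_eq_cart[OF p_int])
    finally show ?thesis .
  qed
  then show ?thesis by (simp add: less_eq_vec_def)
qed

lemma integral_mat_vec_ge_INF:
  "(\<chi> i j. INF \<tau>\<in>{a..b}. M \<tau> $ i $ j) *v integral {a..b} p \<le> integral {a..b} (\<lambda>\<tau>. M \<tau> *v p \<tau>)"
proof -
  have p_entry: "(\<lambda>\<tau>. p \<tau> $ j) integrable_on {a..b}" "\<And>\<tau>. \<tau> \<in> {a..b} \<Longrightarrow> 0 \<le> p \<tau> $ j" for j
    using p_int p_nonneg by (auto simp: integrable_on_iff_component less_eq_vec_def)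
  have "((\<chi> i j. INF \<tau>\<in>{a..b}. M \<tau> $ i $ j) *v integral {a..b} p) $ i
      \<le> integral {a..b} (\<lambda>\<tau>. M \<tau> *v p \<tau>) $ i" for i
  proof -
    have "((\<chi> i j. INF \<tau>\<in>{a..b}. M \<tau> $ i $ j) *v integral {a..b} p) $ i
        = (\<Sum>j\<in>UNIV. (INF \<tau>\<in>{a..b}. M \<tau> $ i $ j) * integral {a..b} (\<lambda>\<tau>. p \<tau> $ j))"
      by (simp add: matrix_vector_mult_def integral_component_eq_cart[OF p_int])
    also have "\<dots> \<le> (\<Sum>j\<in>UNIV. integral {a..b} (\<lambda>\<tau>. M \<tau> $ i $ j * p \<tau> $ j))"
      by (intro sum_mono integral_mult_ge_INF[OF M_cont p_entry])
    also have "\<dots> = integral {a..b} (\<lambda>\<tau>. M \<tau> *v p \<tau>) $ i"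
      by (rule integral_mat_vec_component[symmetric])
    finally show ?thesis .
  qed
  then show ?thesis by (simp add: less_eq_vec_def)
qed

end

lemma mat_vec_mono:
  fixes X :: "real^'m^'n"
  assumes "\<And>i j. 0 \<le> X $ i $ j" and "x \<le> y"
  shows "X *v x \<le> X *v y"
  using assms
  by (auto simp: less_eq_vec_def matrix_vector_mult_def intro!: sum_mono mult_left_mono)

text \<open>No integrability of f is needed: otherwise neither side is integrable and both
  integrals take the default value 0.\<close>

lemma integral_add_left_mono:
  fixes f g h :: "real \<Rightarrow> real^'n"
  assumes g: "g integrable_on S" and h: "h integrable_on S"
    and "integral S g \<le> integral S h"
  shows "integral S (\<lambda>x. f x + g x) \<le> integral S (\<lambda>x. f x + h x)"
proof (cases "f integrable_on S")
  case True
  then show ?thesis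
    using assms by (simp add: integral_add)
next
  case False
  have "\<not> (\<lambda>x. f x + k x) integrable_on S" if "k integrable_on S" for k :: "real \<Rightarrow> real^'n"
    using integrable_diff[OF _ that, of "\<lambda>x. f x + k x"] False by auto
  then show ?thesis
    using g h by (simp add: not_integrable_integral)
qed

lemma continuous_on_input_response:
  fixes A :: "real^'n^'n" and Bp :: "real^'m^'n"
  shows "continuous_on S (\<lambda>\<tau>. (mat_exp ((t - \<tau>) *\<^sub>R A) ** Bp) $ i $ j)"
proof -
  have "continuous_on S (\<lambda>\<tau>. mat_exp ((t - \<tau>) *\<^sub>R A) $ i $ l)" for l
    by (rule continuous_on_compose2[OF continuous_at_imp_continuous_on[of UNIV]])
      (auto intro: isCont_mat_exp_scaleR_entry continuous_intros)
  then show ?thesis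
    by (simp add: matrix_matrix_mult_def continuous_intros)
qed

lemma input_response_nonneg:
  fixes A :: "real^'n^'n" and Bp :: "real^'m^'n"
  assumes "metzler A" and "\<forall>i j. 0 \<le> Bp $ i $ j" and "\<tau> \<le> t"
  shows "0 \<le> (mat_exp ((t - \<tau>) *\<^sub>R A) ** Bp) $ i $ j"
  using assms metzler_mat_exp_nonneg[OF assms(1), of "t - \<tau>"]
  by (auto simp: matrix_matrix_mult_def intro!: sum_nonneg)

lemma b_coef_le_alpha_coef:
  assumes "p integrable_on {0..t}" and "\<And>\<tau>. \<tau> \<in> {0..t} \<Longrightarrow> 0 \<le> p \<tau>"
  shows "b_coef A Bp p t \<le> alpha_coef A Bp t *v integral {0..t} p"
  unfolding b_coef_def alpha_coef_def
  by (rule integral_mat_vec_le_SUP[OF continuous_on_input_response assms])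

lemma beta_coef_le_b_coef:
  assumes "p integrable_on {0..t}" and "\<And>\<tau>. \<tau> \<in> {0..t} \<Longrightarrow> 0 \<le> p \<tau>"
  shows "beta_coef A Bp t *v integral {0..t} p \<le> b_coef A Bp p t"
  unfolding b_coef_def beta_coef_def
  by (rule integral_mat_vec_ge_INF[OF continuous_on_input_response assms])

lemma alpha_coef_nonneg:
  assumes "metzler A" and "\<forall>i j. 0 \<le> Bp $ i $ j" and "0 \<le> t"
  shows "0 \<le> alpha_coef A Bp t $ i $ j"
proof -
  have "bdd_above ((\<lambda>\<tau>. (mat_exp ((t - \<tau>) *\<^sub>R A) ** Bp) $ i $ j) ` {0..t})"
    by (intro bounded_imp_bdd_above compact_imp_bounded compact_continuous_image
        continuous_on_input_response compact_Icc)
  then show ?thesis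
    unfolding alpha_coef_def
    using assms by (auto intro!: cSUP_upper2[of _ _ t] input_response_nonneg)
qed

lemma beta_coef_nonneg:
  assumes "metzler A" and "\<forall>i j. 0 \<le> Bp $ i $ j" and "0 \<le> t"
  shows "0 \<le> beta_coef A Bp t $ i $ j"
  unfolding beta_coef_def
  using assms by (auto intro!: cINF_greatest input_response_nonneg)

lemma b_coef_le_alpha_coef_energy:
  assumes "metzler A" and "\<forall>i j. 0 \<le> Bp $ i $ j" and "0 \<le> t"
    and "p integrable_on {0..t}" and "\<And>\<tau>. \<tau> \<in> {0..t} \<Longrightarrow> 0 \<le> p \<tau>"
    and "integral {0..t} p \<le> E"
  shows "b_coef A Bp p t \<le> alpha_coef A Bp t *v E"
  using b_coef_le_alpha_coef[of p t A Bp] mat_vec_mono[OF alpha_coef_nonneg] assms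
  by (meson order_trans)

lemma beta_coef_energy_le_b_coef:
  assumes "metzler A" and "\<forall>i j. 0 \<le> Bp $ i $ j" and "0 \<le> t"
    and "p integrable_on {0..t}" and "\<And>\<tau>. \<tau> \<in> {0..t} \<Longrightarrow> 0 \<le> p \<tau>"
    and "E \<le> integral {0..t} p"
  shows "beta_coef A Bp t *v E \<le> b_coef A Bp p t"
  using beta_coef_le_b_coef[of p t A Bp] mat_vec_mono[OF beta_coef_nonneg] assms
  by (meson order_trans)

lemma state_mono:
  assumes "p integrable_on {0..t}" "\<And>\<tau>. \<tau> \<in> {0..t} \<Longrightarrow> 0 \<le> p \<tau>"
    and "q integrable_on {0..t}" "\<And>\<tau>. \<tau> \<in> {0..t} \<Longrightarrow> 0 \<le> q \<tau>"
    and "b_coef A Bp p t \<le> b_coef A Bp q t"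
  shows "state A Bp Bd x0 d p t \<le> state A Bp Bd x0 d q t"
proof -
  let ?M = "\<lambda>\<tau>. mat_exp ((t - \<tau>) *\<^sub>R A) ** Bp"
  have response_split: "mat_exp ((t - \<tau>) *\<^sub>R A) *v (Bd *v d \<tau> + Bp *v r \<tau>)
      = mat_exp ((t - \<tau>) *\<^sub>R A) *v (Bd *v d \<tau>) + ?M \<tau> *v r \<tau>" for r \<tau>
    by (simp add: matrix_vector_right_distrib matrix_vector_mul_assoc)
  have "integral {0..t} (\<lambda>\<tau>. mat_exp ((t - \<tau>) *\<^sub>R A) *v (Bd *v d \<tau>) + ?M \<tau> *v p \<tau>)
      \<le> integral {0..t} (\<lambda>\<tau>. mat_exp ((t - \<tau>) *\<^sub>R A) *v (Bd *v d \<tau>) + ?M \<tau> *v q \<tau>)"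
    using assms unfolding b_coef_def
    by (intro integral_add_left_mono integrable_mat_vec[OF continuous_on_input_response])
  then show ?thesis
    unfolding state_def response_split by simp
qed

theorem theorem3:
  fixes A :: "real^'n^'n" and Bp :: "real^'m^'n" and Bd :: "real^'k^'n"
    and x0 xmin xmax :: "real^'n" and d :: "real \<Rightarrow> real^'k"
    and pmin pmax :: "real^'m" and tf :: real
    and pplus pminus pa :: "real \<Rightarrow> real^'m"
    and Eup Edown :: "real \<Rightarrow> real^'m"
  assumes tf: "0 \<le> tf"
    and A_diag: "\<forall>i. A $ i $ i \<le> 0"
    and A_offdiag: "\<forall>i j. i \<noteq> j \<longrightarrow> 0 \<le> A $ i $ j"
    and Bp_nonneg: "\<forall>i j. 0 \<le> Bp $ i $ j"
    and pbounds: "0 \<le> pmin" "pmin \<le> pmax"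
    and xbounds: "xmin \<le> xmax"
    and d_int: "d integrable_on {0..tf}"
    and pplus_int: "pplus integrable_on {0..tf}"
    and pminus_int: "pminus integrable_on {0..tf}"
    and pa_int: "pa integrable_on {0..tf}"
    and pplus_feas: "feasible_power A Bp Bd x0 d tf pmin pmax xmin xmax pplus"
    and pminus_feas: "feasible_power A Bp Bd x0 d tf pmin pmax xmin xmax pminus"
    and E_opt: "\<forall>t\<in>{0..tf}. box_optimal (alpha_coef A Bp t) (beta_coef A Bp t)
                   (b_coef A Bp pplus t) (b_coef A Bp pminus t) (Eup t) (Edown t)"
    and pa_bounds: "\<forall>t\<in>{0..tf}. pmin \<le> pa t \<and> pa t \<le> pmax"
    and pa_energy: "\<forall>i. \<forall>t\<in>{0..tf}.
                      Edown t $ i \<le> integral {0..t} (\<lambda>\<tau>. pa \<tau> $ i)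
                    \<and> integral {0..t} (\<lambda>\<tau>. pa \<tau> $ i) \<le> Eup t $ i"
  shows "\<forall>t\<in>{0..tf}. xmin \<le> state A Bp Bd x0 d pa t \<and> state A Bp Bd x0 d pa t \<le> xmax"
proof
  fix t assume t: "t \<in> {0..tf}"
  have metzler: "metzler A"
    using A_offdiag by (simp add: metzler_def)
  have traj: "p integrable_on {0..t}" "\<And>\<tau>. \<tau> \<in> {0..t} \<Longrightarrow> 0 \<le> p \<tau>"
    if "p \<in> {pa, pplus, pminus}" for p
  proof -
    have "p integrable_on {0..tf}" "\<forall>\<tau>\<in>{0..tf}. pmin \<le> p \<tau>"
      using that pa_int pplus_int pminus_int pa_bounds pplus_feas pminus_feas
      by (auto simp: feasible_power_def)
    then show "p integrable_on {0..t}" "\<And>\<tau>. \<tau> \<in> {0..t} \<Longrightarrow> 0 \<le> p \<tau>"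
      using t pbounds(1) by (auto intro: integrable_on_subinterval order_trans)
  qed
  have box: "alpha_coef A Bp t *v Eup t \<le> b_coef A Bp pplus t"
      "b_coef A Bp pminus t \<le> beta_coef A Bp t *v Edown t"
    using E_opt t by (simp_all add: box_optimal_def box_feasible_def)
  have "Edown t \<le> integral {0..t} pa" "integral {0..t} pa \<le> Eup t"
    using pa_energy[rule_format, OF t]
    by (simp_all add: less_eq_vec_def integral_component_eq_cart[OF traj(1)])
  then have "beta_coef A Bp t *v Edown t \<le> b_coef A Bp pa t"
      "b_coef A Bp pa t \<le> alpha_coef A Bp t *v Eup t"
    using beta_coef_energy_le_b_coef[OF metzler Bp_nonneg _ traj[of pa]]
      b_coef_le_alpha_coef_energy[OF metzler Bp_nonneg _ traj[of pa]] t
    by auto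
  then have "state A Bp Bd x0 d pminus t \<le> state A Bp Bd x0 d pa t"
      "state A Bp Bd x0 d pa t \<le> state A Bp Bd x0 d pplus t"
    using box by (auto intro!: state_mono traj elim: order_trans)
  then show "xmin \<le> state A Bp Bd x0 d pa t \<and> state A Bp Bd x0 d pa t \<le> xmax"
    using pplus_feas pminus_feas t unfolding feasible_power_def by (meson order_trans)
qed

end
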